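(* Let $a\in(0,1)$, $\sigma^2>0$, $M\ge1$, and let $\mu$ satisfy $0<\mu\sigma^2<2$. Then all eigenvalues of $$E_d=\begin{bmatrix}1-\mu\sigma^2&0&0\\0&(1-\mu\sigma^2)a&-\sqrt{2-2a}\\0&(1-\mu\sigma^2)a\sqrt{\tfrac{1-a}{2}}&a\end{bmatrix}$$ lie strictly inside the unit circle, and consequently the exact diffusion error $\widetilde{\mathcal{Z}}_i=[\widetilde{\mathcal{W}}_i;\widetilde{\mathcal{Y}}_i]$, which evolves as $\widetilde{\mathcal{Z}}_i=(Q_d\otimes I_M)\widetilde{\mathcal{Z}}_{i-1}$ with $\widetilde{\mathcal{Y}}_0\in\mathrm{range}(V\otimes I_M)$, converges to $0$.
   Context: Two-agent mean-square-error setting with Hessians $R_{u,1}=R_{u,2}=\sigma^2I_M$. $A=\begin{bmatrix}a&1-a\\1-a&a\end{bmatrix}$, $P=\frac12I_2$, $\bar A=(I_2+A)/2$; the symmetric positive semidefinite matrix $(P-AP)/2$ has eigendecomposition $U\Sigma U^{\mathsf T}$ and $V=U\Sigma^{1/2}U^{\mathsf T}$. $Q_d=\begin{bmatrix}(1-\mu\sigma^2)\bar A&-2V\\(1-\mu\sigma^2)V\bar A&\bar A\end{bmatrix}\in\mathbb{R}^{4\times4}$. The error vector $\widetilde{\mathcal{Z}}_i\in\mathbb{R}^{4M}$ consists of $\widetilde{\mathcal{W}}_i\in\mathbb{R}^{2M}$ followed by $\widetilde{\mathcal{Y}}_i\in\mathbb{R}^{2M}$, and the initial dual error $\widetilde{\mathcal{Y}}_0$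 lies in the range of $V\otimes I_M$ (as it does for the exact diffusion initialization $\mathcal{Y}_0=(V\otimes I_M)\mathcal{W}_0$ and dual optimum in that range). *)

theory Defs
  imports Complex_Main "Jordan_Normal_Form.Char_Poly"
begin

definition kron :: "'a::times mat \<Rightarrow> 'a mat \<Rightarrow> 'a mat" where
  "kron A B = mat (dim_row A * dim_row B) (dim_col A * dim_col B)
     (\<lambda>(i,j). A $$ (i div dim_row B, j div dim_col B) * B $$ (i mod dim_row B, j mod dim_col B))"

definition A_mat :: "real \<Rightarrow> real mat" where
  "A_mat a = mat_of_rows_list 2 [[a, 1 - a], [1 - a, a]]"

definition P_mat :: "real mat" where
  "P_mat = (1/2) \<cdot>\<^sub>m 1\<^sub>m 2"

definition Abar :: "real \<Rightarrow> real mat" where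
  "Abar a = (1/2) \<cdot>\<^sub>m (1\<^sub>m 2 + A_mat a)"

definition D_mat :: "real \<Rightarrow> real mat" where
  "D_mat a = (1/2) \<cdot>\<^sub>m (P_mat - A_mat a * P_mat)"

definition diag_sqrt :: "real mat \<Rightarrow> real mat" where
  "diag_sqrt S = mat (dim_row S) (dim_col S) (\<lambda>(i,j). if i = j then sqrt (S $$ (i,i)) else 0)"

definition eigdecomp :: "real mat \<Rightarrow> real mat \<Rightarrow> real mat \<Rightarrow> bool" where
  "eigdecomp D U S \<longleftrightarrow> U \<in> carrier_mat 2 2 \<and> S \<in> carrier_mat 2 2 \<and>
     U * transpose_mat U = 1\<^sub>m 2 \<and> transpose_mat U * U = 1\<^sub>m 2 \<and>
     (\<forall>i<2. \<forall>j<2. i \<noteq> j \<longrightarrow> S $$ (i,j) = 0) \<and> (\<forall>i<2. S $$ (i,i) \<ge> 0) \<and>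
     D = U * S * transpose_mat U"

definition Q_d :: "real \<Rightarrow> real \<Rightarrow> real \<Rightarrow> real mat \<Rightarrow> real mat" where
  "Q_d a \<mu> \<sigma>2 V = four_block_mat
      ((1 - \<mu> * \<sigma>2) \<cdot>\<^sub>m Abar a) ((-2) \<cdot>\<^sub>m V)
      ((1 - \<mu> * \<sigma>2) \<cdot>\<^sub>m (V * Abar a)) (Abar a)"

definition E_d :: "real \<Rightarrow> real \<Rightarrow> real \<Rightarrow> real mat" where
  "E_d a \<mu> \<sigma>2 = mat_of_rows_list 3
     [[1 - \<mu> * \<sigma>2, 0, 0],
      [0, (1 - \<mu> * \<sigma>2) * a, - sqrt (2 - 2 * a)],
      [0, (1 - \<mu> * \<sigma>2) * a * sqrt ((1 - a) / 2), a]]"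

end

theory Submission
  imports Defs
begin

text \<open>
  Write \<open>c = 1 - \<mu>\<sigma>\<^sup>2 \<in> (-1,1)\<close>. The first coordinate of \<open>E\<^sub>d\<close> decouples with
  eigenvalue \<open>c\<close>; eliminating the third coordinate shows that the other eigenvalues are roots of
  \<open>z\<^sup>2 - a(1+c) z + ca\<close>. A non-real root has \<open>|z|\<^sup>2 = ca\<close>, and a real root is trapped in
  \<open>(-1,1)\<close> because the quadratic is positive at \<open>\<plusminus>1\<close> and its vertex lies in \<open>(-1,1)\<close>.

  For the error recursion, \<open>V\<close> is forced to be \<open>p [1,-1;-1,1]\<close> with \<open>8p\<^sup>2 = 1 - a\<close>. In every
  coordinate slice of the Kronecker structure, the sum over the two agents of the primal error
  decays like \<open>c\<^sup>i\<close>, the sum of the dual error is constant and vanishes by the range condition,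
  and the two differences are coupled so that each satisfies the second order recurrence with
  characteristic polynomial \<open>z\<^sup>2 - a(1+c) z + ca\<close>, hence tends to zero.
\<close>

section \<open>Decay of linear recurrences\<close>

lemma tendsto_zero_if_contracting:
  fixes f g :: "nat \<Rightarrow> real" and r :: real
  assumes r: "0 \<le> r" "r < 1" and f: "\<And>n. 0 \<le> f n"
    and rec: "\<And>n. f (Suc n) \<le> r * f n + g n" and g: "g \<longlonglongrightarrow> 0"
  shows "f \<longlonglongrightarrow> 0"
proof (rule LIMSEQ_I)
  fix e :: real assume e: "0 < e"
  have "e * (1 - r) / 2 > 0" using e r by simp
  from LIMSEQ_D[OF g this] obtain N where N: "\<And>n. n \<ge> N \<Longrightarrow> norm (g n) < e * (1 - r) / 2"
    by auto
  define H where "H = max (f N - e/2) 0"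
  \<comment> \<open>Once \<open>g\<close> is small, the excess of \<open>f\<close> over \<open>e/2\<close> shrinks geometrically.\<close>
  have H: "f (N + k) - e/2 \<le> r ^ k * H" for k
  proof (induction k)
    case 0 then show ?case by (simp add: H_def)
  next
    case (Suc k)
    have "g (N+k) < e * (1 - r) / 2" using N[of "N+k"] by auto
    then have "f (N + Suc k) - e/2 \<le> r * (f (N+k) - e/2)"
      using rec[of "N+k"] by (simp add: algebra_simps diff_divide_distrib)
    also have "\<dots> \<le> r * (r^k * H)" using Suc r by (intro mult_left_mono) auto
    finally show ?case by simp
  qed
  have "(\<lambda>k. r ^ k * H) \<longlonglongrightarrow> 0"
    using tendsto_mult_left_zero[OF LIMSEQ_power_zero, of r H] r by simp
  from LIMSEQ_D[OF this, of "e/2"] e obtain K where K: "\<And>k. k \<ge> K \<Longrightarrow> norm (r^k * H) < e/2"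
    by auto
  show "\<exists>no. \<forall>n\<ge>no. norm (f n - 0) < e"
  proof (intro exI allI impI)
    fix n assume "n \<ge> N + K"
    then have n: "n - N \<ge> K" "n \<ge> N" by simp_all
    then have "f n - e/2 \<le> r^(n - N) * H" using H[of "n - N"] by simp
    moreover have "r^(n - N) * H < e/2" using K[of "n - N"] n by (simp add: abs_less_iff)
    ultimately show "norm (f n - 0) < e" using f[of n] by simp
  qed
qed

lemma linear_recurrence2_tendsto_zero:
  fixes w :: "nat \<Rightarrow> complex" and l1 l2 :: complex
  assumes l: "cmod l1 < 1" "cmod l2 < 1"
    and rec: "\<And>i. w (Suc (Suc i)) = (l1 + l2) * w (Suc i) - l1 * l2 * w i"
  shows "w \<longlonglongrightarrow> 0"
proof -
  define e where "e i = w (Suc i) - l2 * w i" for i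
  have "e (Suc i) = l1 * e i" for i unfolding e_def using rec[of i] by (simp add: algebra_simps)
  then have "e i = l1 ^ i * e 0" for i by (induction i) simp_all
  then have "e = (\<lambda>i. l1 ^ i * e 0)" by (intro ext)
  also have "\<dots> \<longlonglongrightarrow> 0" using l by (intro tendsto_mult_left_zero LIMSEQ_power_zero) simp
  finally have e: "e \<longlonglongrightarrow> 0" .
  have "(\<lambda>i. norm (w i)) \<longlonglongrightarrow> 0"
  proof (rule tendsto_zero_if_contracting[where r = "cmod l2" and g = "\<lambda>i. norm (e i)"])
    show "norm (w (Suc n)) \<le> cmod l2 * norm (w n) + norm (e n)" for n
      using norm_triangle_ineq[of "l2 * w n" "e n"] by (simp add: e_def norm_mult)
    show "(\<lambda>i. norm (e i)) \<longlonglongrightarrow> 0"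
      using e by (simp add: tendsto_norm_zero_iff)
  qed (use l in auto)
  then show ?thesis by (simp add: tendsto_norm_zero_iff)
qed

lemma real_linear_recurrence2_tendsto_zero:
  fixes w :: "nat \<Rightarrow> real" and t d :: real
  assumes roots: "\<And>z::complex. z^2 - of_real t * z + of_real d = 0 \<Longrightarrow> cmod z < 1"
    and rec: "\<And>i. w (Suc (Suc i)) = t * w (Suc i) - d * w i"
  shows "w \<longlonglongrightarrow> 0"
proof -
  define s where "s = csqrt (of_real t ^ 2 - 4 * of_real d)"
  define l1 where "l1 = (of_real t + s) / 2"
  define l2 where "l2 = (of_real t - s) / 2"
  have sum: "l1 + l2 = of_real t" unfolding l1_def l2_def by (simp add: field_simps)
  have "l1 * l2 = (of_real t ^ 2 - s^2) / 4"
    unfolding l1_def l2_def by (simp add: field_simps power2_eq_square)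
  then have prod: "l1 * l2 = of_real d" by (simp add: s_def)
  have "l^2 - of_real t * l + of_real d = 0" if "l = l1 \<or> l = l2" for l
    using that unfolding sum[symmetric] prod[symmetric] by (auto simp: algebra_simps power2_eq_square)
  then have "(\<lambda>i. complex_of_real (w i)) \<longlonglongrightarrow> 0"
    using rec sum prod roots by (intro linear_recurrence2_tendsto_zero[of l1 l2]) auto
  then show ?thesis by (simp add: tendsto_of_real_iff[where c = 0, simplified])
qed

lemma quadratic_roots_in_unit_disc:
  fixes z :: complex and a c :: real
  assumes "0 < a" "a < 1" "-1 < c" "c < 1"
    and eq: "z^2 - of_real (a*(1+c)) * z + of_real (c*a) = 0"
  shows "cmod z < 1"
proof -
  define x y where "x = Re z" "y = Im z"
  define b q where "b = a*(1+c)" "q = c*a"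
  have re: "x^2 - y^2 - b*x + q = 0" using arg_cong[OF eq, of Re]
    by (simp add: x_y_def b_q_def power2_eq_square)
  have im: "(2*x - b) * y = 0" using arg_cong[OF eq, of Im]
    by (simp add: x_y_def b_q_def power2_eq_square algebra_simps)
  have "-a < c*a" "c*a < a" using mult_strict_right_mono[of "-1" c a] assms by simp_all
  then have q: "-1 < q" "q < 1" using assms unfolding b_q_def by linarith+
  have "x^2 + y^2 < 1"
  proof (cases "y = 0")
    case False
    then have "b*x = 2*x^2" using im by (simp add: power2_eq_square)
    then have "x^2 + y^2 = q" using re by linarith
    then show ?thesis using q by simp
  next
    case True
    have b: "0 < b" "b < 2" using assms mult_strict_mono[of a 1 "1+c" 2]
      unfolding b_q_def by auto
    have p: "1 - b + q > 0" "1 + b + q > 0" using assms b unfolding b_q_def by (simp_all add: algebra_simps)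
    \<comment> \<open>The real quadratic is positive at \<open>\<plusminus>1\<close> and its vertex \<open>b/2\<close> lies in \<open>(-1,1)\<close>.\<close>
    have x2: "x^2 - b*x + q = 0" using re True by simp
    have "x^2 - b*x + q = (1 - b + q) + (x - 1)*(x + 1 - b)"
      "x^2 - b*x + q = (1 + b + q) + (x + 1)*(x - 1 - b)"
      by (simp_all add: algebra_simps power2_eq_square)
    then have "\<not> x \<ge> 1" "\<not> x \<le> -1"
      using x2 p b mult_nonneg_nonneg[of "x - 1" "x + 1 - b"] mult_nonpos_nonpos[of "x + 1" "x - 1 - b"]
      by linarith+
    then show ?thesis using True by (simp add: abs_square_less_1)
  qed
  then show ?thesis by (simp add: norm_complex_def x_y_def)
qed

lemma damped_recurrence_tendsto_zero:
  fixes w :: "nat \<Rightarrow> real" and a c :: real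
  assumes "0 < a" "a < 1" "-1 < c" "c < 1"
    and "\<And>i. w (Suc (Suc i)) = a*(1+c) * w (Suc i) - c*a * w i"
  shows "w \<longlonglongrightarrow> 0"
  using quadratic_roots_in_unit_disc[OF assms(1-4)] assms(5)
  by (rule real_linear_recurrence2_tendsto_zero)

section \<open>Kronecker products with the identity\<close>

lemma sum_lessThan_mult_blocks:
  fixes f :: "nat \<Rightarrow> 'b::comm_monoid_add"
  shows "(\<Sum>l<n*M. f l) = (\<Sum>j<n. \<Sum>m<M. f (j*M+m))"
proof -
  have "(\<Sum>l<n*M. f l) = (\<Sum>j<n. sum f {j*M..<j*M+M})" by (rule sum.nat_group[symmetric])
  also have "\<dots> = (\<Sum>j<n. \<Sum>m<M. f (j*M+m))"
  proof (rule sum.cong[OF refl])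
    fix j
    have "sum f {0 + j*M..<M + j*M} = (\<Sum>m = 0..<M. f (m + j*M))" by (rule sum.shift_bounds_nat_ivl)
    then show "sum f {j*M..<j*M+M} = (\<Sum>m<M. f (j*M+m))" by (simp add: add.commute atLeast0LessThan)
  qed
  finally show ?thesis .
qed

lemma kron_dims [simp]:
  "dim_row (kron A B) = dim_row A * dim_row B" "dim_col (kron A B) = dim_col A * dim_col B"
  unfolding kron_def by simp_all

lemma block_index_less:
  fixes j m n M :: nat
  assumes "j < n" "m < M"
  shows "j*M + m < n*M"
proof -
  have "j*M + m < Suc j * M" using assms(2) by simp
  also have "\<dots> \<le> n*M" using assms(1) by (intro mult_right_mono) auto
  finally show ?thesis .
qed

lemma kron_one_mult_vec_index:
  fixes A :: "'a::comm_ring_1 mat" and x :: "'a vec"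
  assumes A: "A \<in> carrier_mat n n'" and x: "x \<in> carrier_vec (n'*M)" and j: "j < n" and m: "m < M"
  shows "(kron A (1\<^sub>m M) *\<^sub>v x) $ (j*M+m) = (\<Sum>j'<n'. A $$ (j,j') * x $ (j'*M+m))"
proof -
  have jm: "j*M+m < n*M" using block_index_less[OF j m] .
  have "(kron A (1\<^sub>m M) *\<^sub>v x) $ (j*M+m) = (\<Sum>l<n'*M. kron A (1\<^sub>m M) $$ (j*M+m, l) * x $ l)"
    using A x jm by (simp add: scalar_prod_def atLeast0LessThan mult.commute)
  also have "\<dots> = (\<Sum>j'<n'. \<Sum>m'<M. kron A (1\<^sub>m M) $$ (j*M+m, j'*M+m') * x $ (j'*M+m'))"
    by (rule sum_lessThan_mult_blocks)
  also have "\<dots> = (\<Sum>j'<n'. \<Sum>m'<M. (if m' = m then A $$ (j,j') * x $ (j'*M+m') else 0))"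
    using A jm m block_index_less[of _ n' _ M] unfolding kron_def
    by (intro sum.cong refl) auto
  also have "\<dots> = (\<Sum>j'<n'. A $$ (j,j') * x $ (j'*M+m))"
    using m by (simp add: sum.delta')
  finally show ?thesis .
qed

section \<open>The square root \<open>V\<close>\<close>

lemma index_mult_mat_2:
  fixes A B :: "'a::comm_ring_1 mat"
  assumes "A \<in> carrier_mat 2 2" "B \<in> carrier_mat 2 2" "i < 2" "j < 2"
  shows "(A*B) $$ (i,j) = A$$(i,0)*B$$(0,j) + A$$(i,1)*B$$(1,j)"
  using assms by (auto simp: scalar_prod_def numeral_2_eq_2)

lemma index_mult_diag_mat:
  fixes A R :: "'a::comm_ring_1 mat"
  assumes A: "A \<in> carrier_mat m n" and R: "R \<in> carrier_mat n n"
    and diag: "\<And>i j. i < n \<Longrightarrow> j < n \<Longrightarrow> i \<noteq> j \<Longrightarrow> R $$ (i,j) = 0"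
    and i: "i < m" and k: "k < n"
  shows "(A * R) $$ (i,k) = A $$ (i,k) * R $$ (k,k)"
proof -
  have "(A * R) $$ (i,k) = (\<Sum>l\<in>{0..<n}. A $$ (i,l) * R $$ (l,k))"
    using A R i k by (simp add: scalar_prod_def)
  also have "\<dots> = (\<Sum>l\<in>{0..<n}. if l = k then A $$ (i,k) * R $$ (k,k) else 0)"
    using diag k by (intro sum.cong) auto
  finally show ?thesis using k by simp
qed

lemma index_conj_diag_mat:
  fixes A R :: "'a::comm_ring_1 mat"
  assumes A: "A \<in> carrier_mat m n" and R: "R \<in> carrier_mat n n"
    and diag: "\<And>i j. i < n \<Longrightarrow> j < n \<Longrightarrow> i \<noteq> j \<Longrightarrow> R $$ (i,j) = 0"
    and i: "i < m" and j: "j < m"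
  shows "(A * R * transpose_mat A) $$ (i,j) = (\<Sum>k<n. A $$ (i,k) * R $$ (k,k) * A $$ (j,k))"
proof -
  define B where "B = A * R"
  have "B \<in> carrier_mat m n" unfolding B_def using A R by simp
  then have "(B * transpose_mat A) $$ (i,j) = (\<Sum>k<n. B $$ (i,k) * A $$ (j,k))"
    using A i j by (simp add: scalar_prod_def atLeast0LessThan)
  also have "\<dots> = (\<Sum>k<n. A $$ (i,k) * R $$ (k,k) * A $$ (j,k))"
    unfolding B_def using index_mult_diag_mat[OF A R diag i] by simp
  finally show ?thesis unfolding B_def .
qed

lemma diag_sqrt_carrier: "S \<in> carrier_mat n n \<Longrightarrow> diag_sqrt S \<in> carrier_mat n n"
  unfolding diag_sqrt_def by simp

lemma index_diag_sqrt:
  "S \<in> carrier_mat n n \<Longrightarrow> i < n \<Longrightarrow> j < n \<Longrightarrow>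
     diag_sqrt S $$ (i,j) = (if i = j then sqrt (S $$ (i,i)) else 0)"
  unfolding diag_sqrt_def by simp

lemma diag_sqrt_squared:
  assumes S: "S \<in> carrier_mat n n"
    and diag: "\<And>i j. i < n \<Longrightarrow> j < n \<Longrightarrow> i \<noteq> j \<Longrightarrow> S $$ (i,j) = 0"
    and nonneg: "\<And>i. i < n \<Longrightarrow> 0 \<le> S $$ (i,i)"
  shows "diag_sqrt S * diag_sqrt S = S"
proof (rule eq_matI)
  fix i j assume "i < dim_row S" "j < dim_col S"
  then have ij: "i < n" "j < n" using S by auto
  show "(diag_sqrt S * diag_sqrt S) $$ (i,j) = S $$ (i,j)"
    using index_mult_diag_mat[OF diag_sqrt_carrier[OF S] diag_sqrt_carrier[OF S] _ ij]
      index_diag_sqrt[OF S] ij diag nonneg by auto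
qed (use S diag_sqrt_carrier[OF S] in auto)

lemma orthogonal_conj_mult:
  fixes U R :: "'a::comm_ring_1 mat"
  assumes U: "U \<in> carrier_mat n n" and R: "R \<in> carrier_mat n n"
    and orth: "transpose_mat U * U = 1\<^sub>m n"
  shows "(U * R * transpose_mat U) * (U * R * transpose_mat U) = U * (R * R) * transpose_mat U"
proof -
  define X where "X = R * transpose_mat U"
  have T: "transpose_mat U \<in> carrier_mat n n" using U by simp
  have X: "X \<in> carrier_mat n n" using R U unfolding X_def by simp
  have URT: "U * R * transpose_mat U = U * X" unfolding X_def using U R T by (rule assoc_mult_mat)
  have XU: "X * U = R" unfolding X_def using assoc_mult_mat[OF R T U] orth R by simp
  have "(U * X) * (U * X) = U * (X * (U * X))"
    using assoc_mult_mat[OF U X mult_carrier_mat[OF U X]] .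
  also have "X * (U * X) = R * X" using assoc_mult_mat[OF X U X] XU by simp
  also have "U * (R * X) = U * (R * R) * transpose_mat U"
    unfolding X_def using assoc_mult_mat[OF R R T] assoc_mult_mat[OF U mult_carrier_mat[OF R R] T] by simp
  finally show ?thesis unfolding URT .
qed

lemma mat_of_rows_list_carrier: "length rs = n \<Longrightarrow> mat_of_rows_list m rs \<in> carrier_mat n m"
  unfolding mat_of_rows_list_def by simp

lemma A_mat_carrier: "A_mat a \<in> carrier_mat 2 2"
  unfolding A_mat_def by (rule mat_of_rows_list_carrier) simp

lemma index_A_mat: "j < 2 \<Longrightarrow> k < 2 \<Longrightarrow> A_mat a $$ (j,k) = (if j = k then a else 1 - a)"
  using less_2_cases[of j] less_2_cases[of k] by (auto simp: A_mat_def mat_of_rows_list_def)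

lemma P_mat_carrier: "P_mat \<in> carrier_mat 2 2"
  unfolding P_mat_def by simp

lemma index_P_mat: "j < 2 \<Longrightarrow> k < 2 \<Longrightarrow> P_mat $$ (j,k) = (if j = k then 1/2 else 0)"
  unfolding P_mat_def by simp

lemma index_D_mat:
  assumes "j < 2" "k < 2"
  shows "D_mat a $$ (j,k) = (if j = k then (1 - a)/4 else - ((1 - a)/4))"
proof -
  have "(A_mat a * P_mat) $$ (j,k) = A_mat a $$ (j,k) / 2"
    using assms less_2_cases[OF assms(2)]
    by (auto simp: index_mult_mat_2[OF A_mat_carrier P_mat_carrier assms] index_P_mat)
  then show ?thesis
    using assms A_mat_carrier[of a] P_mat_carrier
    by (auto simp: D_mat_def index_P_mat index_A_mat field_simps)
qed

definition Vp :: "real \<Rightarrow> real mat" where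
  "Vp p = mat_of_rows_list 2 [[p, -p], [-p, p]]"

lemma Vp_carrier: "Vp p \<in> carrier_mat 2 2"
  unfolding Vp_def by (rule mat_of_rows_list_carrier) simp

lemma index_Vp: "j < 2 \<Longrightarrow> k < 2 \<Longrightarrow> Vp p $$ (j,k) = (if j = k then p else -p)"
  using less_2_cases[of j] less_2_cases[of k] by (auto simp: Vp_def mat_of_rows_list_def)

lemma sqrt_D_mat_eq_Vp:
  fixes V :: "real mat"
  assumes V: "V \<in> carrier_mat 2 2" and sym: "V $$ (1,0) = V $$ (0,1)"
    and diag: "0 \<le> V $$ (0,0)" "0 \<le> V $$ (1,1)" and sq: "V * V = D_mat a"
  shows "\<exists>p\<ge>0. 8 * p^2 = 1 - a \<and> V = Vp p"
proof -
  define x y z where "x = V $$ (0,0)" and "y = V $$ (0,1)" and "z = V $$ (1,1)"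
  have VV: "V $$ (i,0) * V $$ (0,j) + V $$ (i,1) * V $$ (1,j) = D_mat a $$ (i,j)"
    if "i < 2" "j < 2" for i j
    using sq index_mult_mat_2[OF V V that] by simp
  have e1: "x*x + y*y = (1-a)/4" using VV[of 0 0] sym by (simp add: index_D_mat x_def y_def)
  have e2: "x*y + y*z = -((1-a)/4)" using VV[of 0 1] by (simp add: index_D_mat x_def y_def z_def)
  have e3: "y*y + z*z = (1-a)/4" using VV[of 1 1] sym by (simp add: index_D_mat y_def z_def)
  have "x^2 = z^2" using e1 e3 by (simp add: power2_eq_square)
  then have xz: "x = z" using diag unfolding x_def y_def z_def by (simp add: power2_eq_iff_nonneg)
  have "(x + y) * (x + y) = 0" using e1 e2 xz by (simp add: algebra_simps)
  then have yx: "y = -x" by simp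
  have "V = Vp x"
    by (rule eq_matI) (use V sym xz yx in \<open>auto dest!: less_2_cases simp: index_Vp Vp_carrier[THEN carrier_matD(1)] Vp_carrier[THEN carrier_matD(2)] x_def y_def z_def\<close>)
  moreover have "8 * x^2 = 1 - a" using e1 yx by (simp add: power2_eq_square)
  ultimately show ?thesis using diag unfolding x_def y_def z_def by blast
qed

lemma eigdecomp_sqrt_eq_Vp:
  assumes ed: "eigdecomp (D_mat a) U S" and Vd: "V = U * diag_sqrt S * transpose_mat U"
  shows "\<exists>p\<ge>0. 8 * p^2 = 1 - a \<and> V = Vp p"
proof (rule sqrt_D_mat_eq_Vp)
  define R where "R = diag_sqrt S"
  have U: "U \<in> carrier_mat 2 2" and S: "S \<in> carrier_mat 2 2" and orth: "transpose_mat U * U = 1\<^sub>m 2"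
    and Sdiag: "\<And>i j. i < 2 \<Longrightarrow> j < 2 \<Longrightarrow> i \<noteq> j \<Longrightarrow> S $$ (i,j) = 0"
    and Snonneg: "\<And>i. i < 2 \<Longrightarrow> 0 \<le> S $$ (i,i)" and D: "D_mat a = U * S * transpose_mat U"
    using ed unfolding eigdecomp_def by auto
  have R: "R \<in> carrier_mat 2 2" unfolding R_def using S by (rule diag_sqrt_carrier)
  have Rdiag: "\<And>i j. i < 2 \<Longrightarrow> j < 2 \<Longrightarrow> i \<noteq> j \<Longrightarrow> R $$ (i,j) = 0"
    unfolding R_def using index_diag_sqrt[OF S] by simp
  have V: "V $$ (i,j) = (\<Sum>k<2. U $$ (i,k) * sqrt (S $$ (k,k)) * U $$ (j,k))" if "i < 2" "j < 2" for i j
    unfolding Vd R_def[symmetric] using index_conj_diag_mat[OF U R Rdiag that]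
    by (simp add: R_def index_diag_sqrt[OF S])
  show "V \<in> carrier_mat 2 2" unfolding Vd
    using U S by (meson mult_carrier_mat diag_sqrt_carrier transpose_carrier_mat)
  show "V $$ (1,0) = V $$ (0,1)" by (simp add: V mult.commute mult.left_commute)
  have "0 \<le> V $$ (i,i)" if "i < 2" for i
    unfolding V[OF that that]
  proof (intro sum_nonneg)
    fix k assume "k \<in> {..<2::nat}"
    then have "0 \<le> sqrt (S $$ (k,k)) * (U $$ (i,k))^2" using Snonneg by simp
    then show "0 \<le> U $$ (i,k) * sqrt (S $$ (k,k)) * U $$ (i,k)"
      by (simp add: power2_eq_square mult.commute mult.left_commute)
  qed
  then show "0 \<le> V $$ (0,0)" "0 \<le> V $$ (1,1)" by simp_all
  show "V * V = D_mat a"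
    unfolding Vd R_def[symmetric] orthogonal_conj_mult[OF U R orth] D
    using diag_sqrt_squared[OF S Sdiag Snonneg] by (simp add: R_def)
qed

section \<open>The matrices \<open>Q\<^sub>d\<close> and \<open>E\<^sub>d\<close>\<close>

lemma Abar_carrier: "Abar a \<in> carrier_mat 2 2"
  unfolding Abar_def using A_mat_carrier[of a] by simp

lemma index_Abar:
  assumes "j < 2" "k < 2"
  shows "Abar a $$ (j,k) = (if j = k then (1 + a)/2 else (1 - a)/2)"
  using assms A_mat_carrier[of a] by (auto simp: Abar_def index_A_mat)

lemma index_Vp_mult_Abar:
  assumes "j < 2" "k < 2"
  shows "(Vp p * Abar a) $$ (j,k) = (if j = k then p*a else -(p*a))"
  unfolding index_mult_mat_2[OF Vp_carrier Abar_carrier assms]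
  using less_2_cases[OF assms(1)] less_2_cases[OF assms(2)]
  by (elim disjE) (simp_all add: index_Vp index_Abar field_simps)

lemma Q_d_carrier: "Q_d a \<mu> \<sigma>2 V \<in> carrier_mat 4 4"
  using Abar_carrier[of a] unfolding Q_d_def by (intro carrier_matI) simp_all

lemma index_Q_d_Vp:
  assumes "j < 4" "k < 4"
  shows "Q_d a \<mu> \<sigma>2 (Vp p) $$ (j,k) =
    (if j < 2 then if k < 2 then (1 - \<mu>*\<sigma>2) * (if j = k then (1+a)/2 else (1-a)/2)
                  else -2 * (if j = k - 2 then p else -p)
     else if k < 2 then (1 - \<mu>*\<sigma>2) * (if j - 2 = k then p*a else -(p*a))
     else (if j = k then (1+a)/2 else (1-a)/2))"
proof -
  have A: "Abar a \<in> carrier_mat 2 2" "(1 - \<mu> * \<sigma>2) \<cdot>\<^sub>m Abar a \<in> carrier_mat 2 2"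
    "Vp p * Abar a \<in> carrier_mat 2 2" using Abar_carrier[of a] Vp_carrier[of p] by auto
  then have "Q_d a \<mu> \<sigma>2 (Vp p) $$ (j,k) = (if j < 2 then
      if k < 2 then ((1 - \<mu> * \<sigma>2) \<cdot>\<^sub>m Abar a) $$ (j,k) else ((-2) \<cdot>\<^sub>m Vp p) $$ (j,k - 2)
      else if k < 2 then ((1 - \<mu> * \<sigma>2) \<cdot>\<^sub>m (Vp p * Abar a)) $$ (j - 2, k) else Abar a $$ (j - 2, k - 2))"
    using assms unfolding Q_d_def by (subst index_mat_four_block(1)) auto
  then show ?thesis
    using assms A[THEN carrier_matD(1)] A[THEN carrier_matD(2)] Vp_carrier[of p]
    by (auto simp: index_Abar index_Vp index_Vp_mult_Abar simp del: index_mult_mat)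
qed

lemma E_d_carrier: "E_d a \<mu> \<sigma>2 \<in> carrier_mat 3 3"
  unfolding E_d_def by (rule mat_of_rows_list_carrier) simp

lemma index_mult_mat_vec_3:
  fixes A :: "'a::comm_ring_1 mat"
  assumes "A \<in> carrier_mat 3 3" "v \<in> carrier_vec 3" "i < 3"
  shows "(A *\<^sub>v v) $ i = A$$(i,0)*v$0 + A$$(i,1)*v$1 + A$$(i,2)*v$2"
  using assms by (simp add: scalar_prod_def numeral_3_eq_3 numeral_2_eq_2 atLeast0_lessThan_Suc)

lemma E_d_eigenvector_equations:
  fixes a \<mu> \<sigma>2 :: real and v :: "complex vec" and ev :: complex
  defines "c \<equiv> 1 - \<mu> * \<sigma>2"
  assumes v: "v \<in> carrier_vec 3"
    and eig: "map_mat complex_of_real (E_d a \<mu> \<sigma>2) *\<^sub>v v = ev \<cdot>\<^sub>v v"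
  shows "of_real c * v$0 = ev * v$0"
    and "of_real (c * a) * v$1 - of_real (sqrt (2 - 2*a)) * v$2 = ev * v$1"
    and "of_real (c * a * sqrt ((1 - a)/2)) * v$1 + of_real a * v$2 = ev * v$2"
proof -
  define E where "E = map_mat complex_of_real (E_d a \<mu> \<sigma>2)"
  have E: "E \<in> carrier_mat 3 3" unfolding E_def using E_d_carrier by simp
  have "E $$ (i,j) = of_real (E_d a \<mu> \<sigma>2 $$ (i,j))" if "i < 3" "j < 3" for i j
    unfolding E_def using E_d_carrier[of a \<mu> \<sigma>2] that by simp
  then have "ev * v$i = E$$(i,0)*v$0 + E$$(i,1)*v$1 + E$$(i,2)*v$2" if "i < 3" for i
    using eig index_mult_mat_vec_3[OF E v that] v that unfolding E_def[symmetric] by auto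
  note row = this[of 0] this[of 1] this[of 2]
  show "of_real c * v$0 = ev * v$0"
    and "of_real (c * a) * v$1 - of_real (sqrt (2 - 2*a)) * v$2 = ev * v$1"
    and "of_real (c * a * sqrt ((1 - a)/2)) * v$1 + of_real a * v$2 = ev * v$2"
    using row by (auto simp: E_def c_def E_d_def mat_of_rows_list_def)
qed

lemma eigenvalue_E_d_roots:
  fixes a \<mu> \<sigma>2 :: real and ev :: complex
  defines "c \<equiv> 1 - \<mu> * \<sigma>2"
  assumes a: "a < 1" and ev: "eigenvalue (map_mat complex_of_real (E_d a \<mu> \<sigma>2)) ev"
  shows "ev = of_real c \<or> ev^2 - of_real (a*(1+c)) * ev + of_real (c*a) = 0"
proof -
  from ev obtain v where v: "v \<in> carrier_vec 3" "v \<noteq> 0\<^sub>v 3"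
    and eig: "map_mat complex_of_real (E_d a \<mu> \<sigma>2) *\<^sub>v v = ev \<cdot>\<^sub>v v"
    unfolding eigenvalue_def eigenvector_def using E_d_carrier[of a \<mu> \<sigma>2] by auto
  define s1 s2 where "s1 = sqrt ((1 - a)/2)" and "s2 = sqrt (2 - 2*a)"
  note eqs = E_d_eigenvector_equations[OF v(1) eig, folded c_def s1_def s2_def]
  have "s1 * s2 = sqrt ((1 - a)^2)"
    unfolding s1_def s2_def real_sqrt_mult[symmetric] by (simp add: power2_eq_square field_simps)
  then have s12: "s1 * s2 = 1 - a" using a by simp
  have s2: "s2 > 0" unfolding s2_def using a by simp
  show ?thesis
  proof (cases "v$0 = 0")
    case False
    then show ?thesis using eqs(1) by simp
  next
    case True
    have "v$1 \<noteq> 0"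
    proof
      assume "v$1 = 0"
      moreover have "v$2 \<noteq> 0"
      proof
        assume "v$2 = 0"
        with True \<open>v$1 = 0\<close> have "v = 0\<^sub>v 3"
          using v(1) by (intro eq_vecI) (auto simp: less_Suc_eq numeral_3_eq_3 numeral_2_eq_2)
        then show False using v(2) by simp
      qed
      ultimately show False using eqs(2) s2 by simp
    qed
    \<comment> \<open>Eliminating \<open>v$2\<close> from the last two eigen-equations.\<close>
    moreover have "(ev^2 - of_real (a*(1+c)) * ev + of_real (c*a)) * v$1
        = (of_real a - ev) * (of_real (c*a) * v$1 - of_real s2 * v$2 - ev * v$1)
          + of_real s2 * (of_real (c*a*s1) * v$1 + of_real a * v$2 - ev * v$2)
          - of_real (c*a) * v$1 * (of_real (s1*s2) - of_real (1 - a))"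
      by (simp add: algebra_simps power2_eq_square)
    then have "(ev^2 - of_real (a*(1+c)) * ev + of_real (c*a)) * v$1 = 0"
      using eqs(2,3) s12 by simp
    ultimately show ?thesis by simp
  qed
qed

lemma E_d_eigenvalues_in_unit_disc:
  assumes a: "0 < a" "a < 1" and "0 < \<mu> * \<sigma>2" "\<mu> * \<sigma>2 < 2"
    and ev: "eigenvalue (map_mat complex_of_real (E_d a \<mu> \<sigma>2)) ev"
  shows "cmod ev < 1"
proof -
  define c where "c = 1 - \<mu> * \<sigma>2"
  have c: "-1 < c" "c < 1" using assms(3,4) unfolding c_def by auto
  have "ev = of_real c \<or> ev^2 - of_real (a*(1+c)) * ev + of_real (c*a) = 0"
    unfolding c_def by (rule eigenvalue_E_d_roots[OF a(2) ev])
  then show ?thesis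
  proof
    assume "ev = of_real c"
    then show ?thesis using c by simp
  qed (rule quadratic_roots_in_unit_disc[OF a c])
qed

section \<open>Convergence of the error recursion\<close>

lemma coupled_recurrence_tendsto_zero:
  fixes u w :: "nat \<Rightarrow> real"
  assumes a: "0 < a" "a < 1" and c: "-1 < c" "c < 1" and p: "8 * p^2 = 1 - a"
    and u: "\<And>i. u (Suc i) = c*a * u i - 4*p * w i"
    and w: "\<And>i. w (Suc i) = 2*c*p*a * u i + a * w i"
  shows "u \<longlonglongrightarrow> 0" and "w \<longlonglongrightarrow> 0"
proof -
  show "u \<longlonglongrightarrow> 0"
  proof (rule damped_recurrence_tendsto_zero[OF a c])
    fix i
    have pw: "4*p * w i = c*a * u i - u (Suc i)" using u[of i] by simp
    have "u (Suc (Suc i)) = c*a * u (Suc i) - (8*p^2)*c*a * u i - a * (4*p * w i)"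
      by (simp add: u w algebra_simps power2_eq_square)
    also have "\<dots> = a*(1+c) * u (Suc i) - c*a * u i"
      unfolding p pw by (simp add: algebra_simps)
    finally show "u (Suc (Suc i)) = a*(1+c) * u (Suc i) - c*a * u i" .
  qed
  show "w \<longlonglongrightarrow> 0"
  proof (rule damped_recurrence_tendsto_zero[OF a c])
    fix i
    have pu: "2*c*p*a * u i = w (Suc i) - a * w i" using w[of i] by simp
    have "w (Suc (Suc i)) = c*a * (2*c*p*a * u i) - (8*p^2)*c*a * w i + a * w (Suc i)"
      by (simp add: u w algebra_simps power2_eq_square)
    also have "\<dots> = a*(1+c) * w (Suc i) - c*a * w i"
      unfolding p pu by (simp add: algebra_simps)
    finally show "w (Suc (Suc i)) = a*(1+c) * w (Suc i) - c*a * w i" .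
  qed
qed

lemma kron_Vp_range_blocks_opposite:
  fixes z y :: "real vec"
  assumes y: "y \<in> carrier_vec (2*M)" and m: "m < M"
    and z: "vec (2*M) (\<lambda>k. z $ (2*M + k)) = kron (Vp p) (1\<^sub>m M) *\<^sub>v y"
  shows "z $ (2*M + m) + z $ (3*M + m) = 0"
proof -
  have "z $ (2*M + l) = (kron (Vp p) (1\<^sub>m M) *\<^sub>v y) $ l" if "l < 2*M" for l
    using arg_cong[OF z, of "\<lambda>v. v $ l"] that by simp
  from this[of m] this[of "M + m"]
  have "z $ (2*M + m) = (kron (Vp p) (1\<^sub>m M) *\<^sub>v y) $ (0*M + m)"
    "z $ (3*M + m) = (kron (Vp p) (1\<^sub>m M) *\<^sub>v y) $ (1*M + m)"
    using m by (simp_all add: algebra_simps)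
  then show ?thesis
    using kron_one_mult_vec_index[OF Vp_carrier y _ m, of 0] kron_one_mult_vec_index[OF Vp_carrier y _ m, of 1]
    by (simp add: index_Vp numeral_2_eq_2)
qed

lemma exact_diffusion_slice_tendsto_zero:
  fixes x :: "nat \<Rightarrow> nat \<Rightarrow> real"
  assumes a: "0 < a" "a < 1" and "0 < \<mu> * \<sigma>2" "\<mu> * \<sigma>2 < 2" and p: "8 * p^2 = 1 - a"
    and rec: "\<And>j i. j < 4 \<Longrightarrow> x j (Suc i) = (\<Sum>k<4. Q_d a \<mu> \<sigma>2 (Vp p) $$ (j,k) * x k i)"
    and init: "x 2 0 + x 3 0 = 0" and j: "j < 4"
  shows "x j \<longlonglongrightarrow> 0"
proof -
  define c where "c = 1 - \<mu> * \<sigma>2"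
  have c: "-1 < c" "c < 1" using assms(3,4) unfolding c_def by auto
  have sum4: "(\<Sum>k<4. f k) = f 0 + f 1 + f 2 + f 3" for f :: "nat \<Rightarrow> real"
    by (simp add: eval_nat_numeral)
  have r0: "x 0 (Suc i) = c*((1+a)/2) * x 0 i + c*((1-a)/2) * x 1 i - 2*p * x 2 i + 2*p * x 3 i"
   and r1: "x 1 (Suc i) = c*((1-a)/2) * x 0 i + c*((1+a)/2) * x 1 i + 2*p * x 2 i - 2*p * x 3 i"
   and r2: "x 2 (Suc i) = c*p*a * x 0 i - c*p*a * x 1 i + ((1+a)/2) * x 2 i + ((1-a)/2) * x 3 i"
   and r3: "x 3 (Suc i) = - c*p*a * x 0 i + c*p*a * x 1 i + ((1-a)/2) * x 2 i + ((1+a)/2) * x 3 i"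
    for i using rec[of 0 i] rec[of 1 i] rec[of 2 i] rec[of 3 i]
    by (simp_all add: sum4 index_Q_d_Vp c_def algebra_simps)
  \<comment> \<open>Sums and differences over the two agents decouple the dynamics.\<close>
  define wp wm yp ym where "wp i = x 0 i + x 1 i" and "wm i = x 0 i - x 1 i"
    and "yp i = x 2 i + x 3 i" and "ym i = x 2 i - x 3 i" for i
  have wpS: "wp (Suc i) = c * wp i" for i unfolding wp_def r0 r1 by (simp add: field_simps)
  have "wp = (\<lambda>i. c ^ i * wp 0)"
  proof
    show "wp i = c ^ i * wp 0" for i by (induction i) (simp_all add: wpS)
  qed
  also have "\<dots> \<longlonglongrightarrow> 0" using c by (intro tendsto_mult_left_zero LIMSEQ_power_zero) simp
  finally have wp: "wp \<longlonglongrightarrow> 0" .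
  have ypS: "yp (Suc i) = yp i" for i unfolding yp_def r2 r3 by (simp add: field_simps)
  have yp0: "yp 0 = 0" using init by (simp add: yp_def)
  have "yp = (\<lambda>_. 0)"
  proof
    show "yp i = 0" for i by (induction i) (simp_all add: ypS yp0)
  qed
  then have yp: "yp \<longlonglongrightarrow> 0" by simp
  have "wm (Suc i) = c*a * wm i - 4*p * ym i" for i
    unfolding wm_def ym_def r0 r1 by (simp add: field_simps)
  moreover have "ym (Suc i) = 2*c*p*a * wm i + a * ym i" for i
    unfolding wm_def ym_def r2 r3 by (simp add: field_simps)
  ultimately have "wm \<longlonglongrightarrow> 0" and "ym \<longlonglongrightarrow> 0"
    using coupled_recurrence_tendsto_zero[OF a c p] by blast+
  then have "(\<lambda>i. (wp i + wm i) / 2) \<longlonglongrightarrow> 0" "(\<lambda>i. (wp i - wm i) / 2) \<longlonglongrightarrow> 0"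
    "(\<lambda>i. (yp i + ym i) / 2) \<longlonglongrightarrow> 0" "(\<lambda>i. (yp i - ym i) / 2) \<longlonglongrightarrow> 0"
    using wp yp by (auto intro!: tendsto_eq_intros)
  moreover have "x 0 = (\<lambda>i. (wp i + wm i) / 2)" "x 1 = (\<lambda>i. (wp i - wm i) / 2)"
    "x 2 = (\<lambda>i. (yp i + ym i) / 2)" "x 3 = (\<lambda>i. (yp i - ym i) / 2)"
    by (simp_all add: fun_eq_iff wp_def wm_def yp_def ym_def field_simps)
  moreover have "j = 0 \<or> j = 1 \<or> j = 2 \<or> j = 3" using j by auto
  ultimately show ?thesis by auto
qed

theorem lemma6:
  fixes a \<sigma>2 \<mu> :: real and M :: nat
    and U S V :: "real mat" and Z :: "nat \<Rightarrow> real vec"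
  assumes "0 < a" "a < 1" "\<sigma>2 > 0" "M \<ge> 1"
    and "0 < \<mu> * \<sigma>2" "\<mu> * \<sigma>2 < 2"
    and "eigdecomp (D_mat a) U S" "V = U * diag_sqrt S * transpose_mat U"
    and "Z 0 \<in> carrier_vec (4 * M)"
    and "\<exists>x \<in> carrier_vec (2 * M).
           vec (2 * M) (\<lambda>k. Z 0 $ (2 * M + k)) = kron V (1\<^sub>m M) *\<^sub>v x"
    and "\<And>i. i \<ge> 1 \<Longrightarrow> Z i = kron (Q_d a \<mu> \<sigma>2 V) (1\<^sub>m M) *\<^sub>v Z (i - 1)"
  shows "(\<forall>ev. eigenvalue (map_mat complex_of_real (E_d a \<mu> \<sigma>2)) ev \<longrightarrow> cmod ev < 1)
       \<and> (\<forall>k < 4 * M. (\<lambda>i. Z i $ k) \<longlonglongrightarrow> 0)"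
proof (intro conjI allI impI)
  show "cmod ev < 1" if "eigenvalue (map_mat complex_of_real (E_d a \<mu> \<sigma>2)) ev" for ev
    using E_d_eigenvalues_in_unit_disc[OF assms(1,2,5,6) that] .
  obtain p where p: "8 * p^2 = 1 - a" and V: "V = Vp p"
    using eigdecomp_sqrt_eq_Vp[OF assms(7,8)] by blast
  define K where "K = kron (Q_d a \<mu> \<sigma>2 V) (1\<^sub>m M)"
  have Z: "Z (Suc i) = K *\<^sub>v Z i" for i using assms(11)[of "Suc i"] unfolding K_def by simp
  have "dim_row K = 4 * M" using Q_d_carrier[of a \<mu> \<sigma>2 V] unfolding K_def by simp
  then have Zc: "Z i \<in> carrier_vec (4 * M)" for i
    using assms(9) by (induction i) (auto simp: Z intro!: carrier_vecI)
  fix k assume k: "k < 4 * M"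
  define j m where "j = k div M" and "m = k mod M"
  have jm: "j < 4" "m < M" "k = j * M + m"
    using k assms(4) by (auto simp: j_def m_def less_mult_imp_div_less)
  have init: "Z 0 $ (2 * M + m) + Z 0 $ (3 * M + m) = 0"
    using assms(10) kron_Vp_range_blocks_opposite[OF _ jm(2)] unfolding V by blast
  have "(\<lambda>i. Z i $ (j * M + m)) \<longlonglongrightarrow> 0"
  proof (rule exact_diffusion_slice_tendsto_zero[OF assms(1,2,5,6) p, where x = "\<lambda>j i. Z i $ (j * M + m)"])
    show "Z (Suc i) $ (j' * M + m) = (\<Sum>k<4. Q_d a \<mu> \<sigma>2 (Vp p) $$ (j',k) * Z i $ (k * M + m))"
      if "j' < 4" for j' i
      unfolding Z K_def V using kron_one_mult_vec_index[OF Q_d_carrier Zc that jm(2)] .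
  qed (simp_all add: init jm(1))
  then show "(\<lambda>i. Z i $ k) \<longlonglongrightarrow> 0" using jm(3) by simp
qed

end
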